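(* There is an absolute constant $c>0$ such that for every $n\ge1$, every $\epsilon\in(1/n,1]$, and every $\epsilon$-differentially private algorithm $M$ that takes a private edge set $E$ on a fixed vertex set $V$ with $|V|=n$ and outputs an orientation $M_E$ assigning to each unordered pair $\{u,v\}$ of distinct vertices one of its endpoints $M_E(\{u,v\})\in\{u,v\}$, there exists a graph $G=(V,E)$ with $E\neq\emptyset$ such that $\mathbb{E}\big[|\{M_E(e):e\in E\}|\big]\ge \frac{c}{\epsilon}\,\mathrm{OPT}(G)$.
   Context: $M$ is $\epsilon$-differentially private if for any two edge sets $E,E'$ on $V$ with symmetric difference of size one and any set $\mathcal{O}$ of outputs, $\Pr[M(E)\in\mathcal{O}]\le e^{\epsilon}\Pr[M(E')\in\mathcal{O}]$. The set $\{M_E(e):e\in E\}$ is a vertex cover of $G$; $\mathrm{OPT}(G)$ denotes the minimum size of a vertex cover of $G$. *)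

theory Defs
  imports "HOL-Probability.Probability"
begin

definition pairs :: "'a set \<Rightarrow> 'a set set" where
  "pairs V = {{u, v} | u v. u \<in> V \<and> v \<in> V \<and> u \<noteq> v}"

definition edge_sets :: "'a set \<Rightarrow> 'a set set set" where
  "edge_sets V = Pow (pairs V)"

text \<open>Orientations: each pair {u,v} is mapped to one of its endpoints;
  outside the pairs the value is fixed (undefined), so the output space
  is exactly the set of orientations.\<close>
definition orientations :: "'a set \<Rightarrow> ('a set \<Rightarrow> 'a) set" where
  "orientations V = {f. (\<forall>e\<in>pairs V. f e \<in> e) \<and> (\<forall>e. e \<notin> pairs V \<longrightarrow> f e = undefined)}"

definition is_vertex_cover :: "'a set \<Rightarrow> 'a set set \<Rightarrow> 'a set \<Rightarrow> bool" where
  "is_vertex_cover V E C \<longleftrightarrow> C \<subseteq> V \<and> (\<forall>e\<in>E. e \<inter> C \<noteq> {})"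

definition OPT :: "'a set \<Rightarrow> 'a set set \<Rightarrow> nat" where
  "OPT V E = Min {card C | C. is_vertex_cover V E C}"

definition edge_dp :: "real \<Rightarrow> 'a set \<Rightarrow> ('a set set \<Rightarrow> 'b pmf) \<Rightarrow> bool" where
  "edge_dp \<epsilon> V M \<longleftrightarrow>
     (\<forall>E\<in>edge_sets V. \<forall>E'\<in>edge_sets V. card (E - E' \<union> (E' - E)) = 1 \<longrightarrow>
        (\<forall>S. measure_pmf.prob (M E) S \<le> exp \<epsilon> * measure_pmf.prob (M E') S))"

end

theory Submission
  imports Defs
begin

text \<open>Fix a set \<open>S\<close> of \<open>k + 1\<close> vertices with \<open>k \<approx> 1/\<epsilon>\<close> and consider the stars centred at
  the vertices of \<open>S\<close> with all other vertices of \<open>S\<close> as leaves; each has a vertex cover of size one. On the empty graph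
  the mechanism still chooses an endpoint of every pair of \<open>S\<close>, so on average over the centres
  \<open>v \<in> S\<close> it chooses about \<open>k/2\<close> leaves of the star at \<open>v\<close>. The star at a centre attaining
  the average differs from the empty graph in \<open>k\<close> edges, so by group privacy its output
  distribution is within a factor \<open>exp (\<epsilon> k) \<le> e\<close> of the one on the empty graph, and on that
  star the mechanism still outputs \<open>\<Omega>(k) = \<Omega>(1/\<epsilon>)\<close> cover vertices in expectation.\<close>

lemma finite_pairs: "finite V \<Longrightarrow> finite (pairs V)"
  by (rule finite_subset[of _ "Pow V"]) (auto simp: pairs_def)

lemma finite_orientations: "finite V \<Longrightarrow> finite (orientations V)"
proof -
  assume "finite V"
  have "orientations V = PiE (pairs V) (\<lambda>e. e)"
    unfolding orientations_def PiE_def extensional_def Pi_def by auto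
  moreover have "finite e" if "e \<in> pairs V" for e
    using that unfolding pairs_def by auto
  ultimately show ?thesis
    using finite_PiE finite_pairs[OF \<open>finite V\<close>] by metis
qed

lemma orientation_in_pair:
  assumes "f \<in> orientations V" and "u \<in> V" and "w \<in> V" and "u \<noteq> w"
  shows "f {u, w} \<in> {u, w}"
proof -
  have "{u, w} \<in> pairs V"
    using assms(2-4) unfolding pairs_def by blast
  then show ?thesis
    using assms(1) unfolding orientations_def by blast
qed

lemma edge_dp_group_privacy:
  assumes dp: "edge_dp \<epsilon> V M" and "finite V" and "F \<subseteq> pairs V"
  shows "measure_pmf.prob (M {}) S \<le> exp (\<epsilon> * card F) * measure_pmf.prob (M F) S"
  using \<open>F \<subseteq> pairs V\<close>
proof (induction F rule: infinite_finite_induct)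
  case (infinite F)
  then show ?case
    using finite_pairs[OF \<open>finite V\<close>] finite_subset by blast
next
  case empty
  then show ?case by simp
next
  case (insert x F)
  have "F - insert x F \<union> (insert x F - F) = {x}"
    using insert by auto
  then have "card (F - insert x F \<union> (insert x F - F)) = 1"
    by simp
  moreover have "F \<in> edge_sets V" "insert x F \<in> edge_sets V"
    using insert unfolding edge_sets_def by auto
  ultimately have step: "measure_pmf.prob (M F) S \<le> exp \<epsilon> * measure_pmf.prob (M (insert x F)) S"
    using dp unfolding edge_dp_def by blast
  have "measure_pmf.prob (M {}) S \<le> exp (\<epsilon> * card F) * measure_pmf.prob (M F) S"
    using insert by blast
  also have "\<dots> \<le> exp (\<epsilon> * card F) * (exp \<epsilon> * measure_pmf.prob (M (insert x F)) S)"
    using step by (simp add: mult_left_mono)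
  also have "\<dots> = exp (\<epsilon> * card (insert x F)) * measure_pmf.prob (M (insert x F)) S"
    using insert by (simp add: distrib_left exp_add)
  finally show ?case .
qed

lemma expectation_le_by_pmf_ratio:
  fixes g :: "'a \<Rightarrow> real"
  assumes "finite A" and "set_pmf q \<subseteq> A"
    and pmf_le: "\<And>x. pmf p x \<le> C * pmf q x" and "\<And>x. 0 \<le> g x"
  shows "measure_pmf.expectation p g \<le> C * measure_pmf.expectation q g"
proof -
  have "set_pmf p \<subseteq> set_pmf q"
  proof
    fix x assume "x \<in> set_pmf p"
    then have "0 < C * pmf q x"
      using pmf_le[of x] by (simp add: set_pmf_eq' less_le_trans)
    then show "x \<in> set_pmf q"
      by (auto simp: set_pmf_iff)
  qed
  then have "measure_pmf.expectation p g = (\<Sum>x\<in>A. g x * pmf p x)"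
    using assms by (intro integral_measure_pmf_real) auto
  also have "\<dots> \<le> (\<Sum>x\<in>A. C * (g x * pmf q x))"
    using assms by (intro sum_mono) (metis mult.left_commute mult_left_mono)
  also have "\<dots> = C * measure_pmf.expectation q g"
    using assms by (simp add: integral_measure_pmf_real sum_distrib_left subset_iff)
  finally show ?thesis .
qed

lemma ex_expectation_ge_average:
  fixes g :: "'i \<Rightarrow> 'a \<Rightarrow> real"
  assumes "finite (set_pmf p)" and "finite S" and "S \<noteq> {}"
    and sum_ge: "\<And>x. x \<in> set_pmf p \<Longrightarrow> B \<le> (\<Sum>i\<in>S. g i x)"
  shows "\<exists>i\<in>S. B / card S \<le> measure_pmf.expectation p (g i)"
proof (rule ccontr)
  assume "\<not> ?thesis"
  then have "(\<Sum>i\<in>S. measure_pmf.expectation p (g i)) < (\<Sum>i\<in>S. B / card S)"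
    using assms by (intro sum_strict_mono) auto
  also have "\<dots> = B"
    using assms by simp
  also have "B \<le> measure_pmf.expectation p (\<lambda>x. \<Sum>i\<in>S. g i x)"
    using assms by (intro measure_pmf.integral_ge_const integrable_measure_pmf_finite)
      (auto simp: AE_measure_pmf_iff)
  also have "\<dots> = (\<Sum>i\<in>S. measure_pmf.expectation p (g i))"
    by (rule Bochner_Integration.integral_sum) (use assms in \<open>auto intro: integrable_measure_pmf_finite\<close>)
  finally show False by simp
qed

definition chosen_neighbours :: "('a set \<Rightarrow> 'a) \<Rightarrow> 'a set \<Rightarrow> 'a \<Rightarrow> 'a set" where
  "chosen_neighbours f S v = {w \<in> S - {v}. f {v, w} = w}"

text \<open>Every pair \<open>{v, w}\<close> of \<open>S\<close> contributes to exactly one of the summands, so the sum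
  is the number of pairs of \<open>S\<close>.\<close>
lemma sum_card_chosen_neighbours:
  assumes "finite S" and "S \<subseteq> V" and f: "f \<in> orientations V"
  shows "card S * (card S - 1) \<le> 2 * (\<Sum>v\<in>S. card (chosen_neighbours f S v))"
proof -
  define B where "B = Sigma S (chosen_neighbours f S)"
  have "finite B"
    using \<open>finite S\<close> by (auto simp: B_def chosen_neighbours_def)
  have "Sigma S (\<lambda>v. S - {v}) \<subseteq> B \<union> prod.swap ` B"
  proof
    fix p assume "p \<in> Sigma S (\<lambda>v. S - {v})"
    then obtain v w where p: "p = (v, w)" "v \<in> S" "w \<in> S" "v \<noteq> w"
      by auto
    then have "f {v, w} = w \<or> f {w, v} = v"
      using orientation_in_pair[OF f, of v w] \<open>S \<subseteq> V\<close> by (auto simp: insert_commute)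
    then show "p \<in> B \<union> prod.swap ` B"
    proof
      assume "f {w, v} = v"
      then have "(w, v) \<in> B"
        using p by (auto simp: B_def chosen_neighbours_def)
      then show ?thesis
        using p by (simp add: rev_image_eqI)
    qed (use p in \<open>simp add: B_def chosen_neighbours_def\<close>)
  qed
  then have "card (Sigma S (\<lambda>v. S - {v})) \<le> card (B \<union> prod.swap ` B)"
    using \<open>finite B\<close> by (intro card_mono) auto
  also have "\<dots> \<le> card B + card (prod.swap ` B)"
    by (rule card_Un_le)
  also have "\<dots> \<le> 2 * card B"
    using card_image_le[OF \<open>finite B\<close>, of prod.swap] by simp
  finally show ?thesis
    using \<open>finite S\<close> by (simp add: B_def chosen_neighbours_def mult.commute)
qed

definition star :: "'a \<Rightarrow> 'a set \<Rightarrow> 'a set set" where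
  "star v W = (\<lambda>w. {v, w}) ` W"

lemma star_subset_pairs: "v \<in> V \<Longrightarrow> W \<subseteq> V - {v} \<Longrightarrow> star v W \<subseteq> pairs V"
  unfolding star_def pairs_def by blast

lemma chosen_neighbours_subset_image_star:
  "chosen_neighbours f S v \<subseteq> f ` star v (S - {v})"
proof
  fix w assume "w \<in> chosen_neighbours f S v"
  then have "{v, w} \<in> star v (S - {v})" and "w = f {v, w}"
    by (auto simp: chosen_neighbours_def star_def)
  then show "w \<in> f ` star v (S - {v})"
    by (rule rev_image_eqI)
qed

lemma OPT_star_le_1:
  assumes "finite V" and "v \<in> V"
  shows "OPT V (star v W) \<le> 1"
proof -
  have "{card C | C. is_vertex_cover V (star v W) C} \<subseteq> {0..card V}"
    using \<open>finite V\<close> by (auto simp: is_vertex_cover_def intro: card_mono)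
  then have "finite {card C | C. is_vertex_cover V (star v W) C}"
    using finite_subset by blast
  moreover have "is_vertex_cover V (star v W) {v}"
    using assms by (auto simp: is_vertex_cover_def star_def)
  then have "1 \<in> {card C | C. is_vertex_cover V (star v W) C}"
    by force
  ultimately show ?thesis
    unfolding OPT_def by (rule Min_le)
qed

lemma star_eq_empty_iff: "star v W = {} \<longleftrightarrow> W = {}"
  unfolding star_def by simp

lemma card_star_le: "finite W \<Longrightarrow> card (star v W) \<le> card W"
  unfolding star_def by (rule card_image_le)

lemma ex_star_expected_chosen_ge:
  assumes "finite (set_pmf p)" and "set_pmf p \<subseteq> orientations V"
    and "S \<subseteq> V" and "finite S" and cS: "card S = k + 1"
  shows "\<exists>v\<in>S. real k / 2 \<le> measure_pmf.expectation p (\<lambda>f. real (card (f ` star v (S - {v}))))"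
proof -
  have chosen_sum: "real (card S * (card S - 1)) / 2 \<le> (\<Sum>v\<in>S. real (card (chosen_neighbours f S v)))"
    if "f \<in> set_pmf p" for f
  proof -
    have "card S * (card S - 1) \<le> 2 * (\<Sum>v\<in>S. card (chosen_neighbours f S v))"
      using sum_card_chosen_neighbours[OF \<open>finite S\<close> \<open>S \<subseteq> V\<close>] assms(2) that by blast
    then have "real (card S * (card S - 1)) \<le> real (2 * (\<Sum>v\<in>S. card (chosen_neighbours f S v)))"
      by (rule of_nat_mono)
    then show ?thesis
      by simp
  qed
  have "S \<noteq> {}"
    using cS by auto
  from assms(1) \<open>finite S\<close> this chosen_sum
  have "\<exists>v\<in>S. real (card S * (card S - 1)) / 2 / card S
      \<le> measure_pmf.expectation p (\<lambda>f. real (card (chosen_neighbours f S v)))"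
    by (rule ex_expectation_ge_average)
  moreover have "real (card S * (card S - 1)) / 2 / card S = real k / 2"
    using cS by (simp add: field_simps)
  ultimately obtain v where "v \<in> S"
    and "real k / 2 \<le> measure_pmf.expectation p (\<lambda>f. real (card (chosen_neighbours f S v)))"
    by auto
  moreover have "measure_pmf.expectation p (\<lambda>f. real (card (chosen_neighbours f S v)))
      \<le> measure_pmf.expectation p (\<lambda>f. real (card (f ` star v (S - {v}))))"
  proof (intro integral_mono integrable_measure_pmf_finite assms(1))
    show "real (card (chosen_neighbours f S v)) \<le> real (card (f ` star v (S - {v})))" for f
      using chosen_neighbours_subset_image_star[of f S v] \<open>finite S\<close>
      by (simp add: star_def card_mono)
  qed
  ultimately show ?thesis
    by (meson order_trans)
qed

lemma edge_dp_expectation_group_privacy: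
  fixes g :: "('a set \<Rightarrow> 'a) \<Rightarrow> real"
  assumes dp: "edge_dp \<epsilon> V M" and "finite V" and "E \<subseteq> pairs V"
    and supp: "\<forall>E\<in>edge_sets V. set_pmf (M E) \<subseteq> orientations V" and "\<And>f. 0 \<le> g f"
  shows "measure_pmf.expectation (M {}) g \<le> exp (\<epsilon> * card E) * measure_pmf.expectation (M E) g"
proof (rule expectation_le_by_pmf_ratio)
  show "finite (orientations V)"
    using \<open>finite V\<close> by (rule finite_orientations)
  show "set_pmf (M E) \<subseteq> orientations V"
    using supp \<open>E \<subseteq> pairs V\<close> by (simp add: edge_sets_def)
  show "pmf (M {}) f \<le> exp (\<epsilon> * card E) * pmf (M E) f" for f
    using edge_dp_group_privacy[OF dp \<open>finite V\<close> \<open>E \<subseteq> pairs V\<close>, of "{f}"]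
    by (simp add: measure_pmf_single)
qed (use assms in simp)

lemma edge_dp_star_lower_bound:
  assumes dp: "edge_dp \<epsilon> V M" and "0 \<le> \<epsilon>" and "finite V"
    and supp: "\<forall>E\<in>edge_sets V. set_pmf (M E) \<subseteq> orientations V"
    and "S \<subseteq> V" and cS: "card S = k + 1" and "1 \<le> k" and "\<epsilon> * k \<le> 1"
  shows "\<exists>E\<in>edge_sets V. E \<noteq> {} \<and> OPT V E \<le> 1 \<and>
           real k / 6 \<le> measure_pmf.expectation (M E) (\<lambda>f. real (card (f ` E)))"
proof -
  have "finite S"
    using \<open>S \<subseteq> V\<close> \<open>finite V\<close> finite_subset by blast
  have "set_pmf (M {}) \<subseteq> orientations V"
    using supp by (simp add: edge_sets_def)
  moreover from this have "finite (set_pmf (M {}))"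
    using finite_orientations[OF \<open>finite V\<close>] finite_subset by blast
  ultimately obtain v where "v \<in> S" and avg:
    "real k / 2 \<le> measure_pmf.expectation (M {}) (\<lambda>f. real (card (f ` star v (S - {v}))))"
    using ex_star_expected_chosen_ge[OF _ _ \<open>S \<subseteq> V\<close> \<open>finite S\<close> cS] by blast
  define E where "E = star v (S - {v})"
  define X where "X = measure_pmf.expectation (M E) (\<lambda>f. real (card (f ` E)))"
  have "card (S - {v}) = k"
    using cS \<open>v \<in> S\<close> by (simp add: card_Diff_singleton_if)
  have "E \<subseteq> pairs V"
    unfolding E_def using \<open>v \<in> S\<close> \<open>S \<subseteq> V\<close> by (intro star_subset_pairs) auto
  moreover have "E \<noteq> {}"
    using \<open>card (S - {v}) = k\<close> \<open>1 \<le> k\<close> unfolding E_def star_eq_empty_iff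
    by (metis card.empty not_one_le_zero)
  moreover have "OPT V E \<le> 1"
    unfolding E_def using \<open>finite V\<close> \<open>v \<in> S\<close> \<open>S \<subseteq> V\<close> by (intro OPT_star_le_1) auto
  moreover have "real k / 6 \<le> X"
  proof -
    have "\<epsilon> * card E \<le> 1"
      using card_star_le[of "S - {v}" v] \<open>finite S\<close> \<open>card (S - {v}) = k\<close> \<open>0 \<le> \<epsilon>\<close> \<open>\<epsilon> * k \<le> 1\<close>
      unfolding E_def by (meson finite_Diff mult_left_mono of_nat_mono order_trans)
    have "0 \<le> X"
      unfolding X_def by (simp add: integral_nonneg_AE)
    have "real k / 2 \<le> exp (\<epsilon> * card E) * X"
      using avg edge_dp_expectation_group_privacy[OF dp \<open>finite V\<close> \<open>E \<subseteq> pairs V\<close> supp]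
      unfolding X_def E_def by (meson of_nat_0_le_iff order_trans)
    also have "\<dots> \<le> 3 * X"
    proof (rule mult_right_mono)
      show "exp (\<epsilon> * card E) \<le> 3"
        using \<open>\<epsilon> * card E \<le> 1\<close> exp_le by (meson exp_le_cancel_iff order_trans)
    qed (rule \<open>0 \<le> X\<close>)
    finally show ?thesis
      by simp
  qed
  ultimately show ?thesis
    unfolding X_def edge_sets_def by blast
qed

theorem mainTheorem8:
  shows "\<exists>c::real. c > 0 \<and>
    (\<forall>(n::nat) (\<epsilon>::real) (V::nat set) (M :: nat set set \<Rightarrow> (nat set \<Rightarrow> nat) pmf).
       n \<ge> 1 \<longrightarrow> 1 / real n < \<epsilon> \<longrightarrow> \<epsilon> \<le> 1 \<longrightarrow> finite V \<longrightarrow> card V = n \<longrightarrow>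
       (\<forall>E\<in>edge_sets V. set_pmf (M E) \<subseteq> orientations V) \<longrightarrow>
       edge_dp \<epsilon> V M \<longrightarrow>
       (\<exists>E\<in>edge_sets V. E \<noteq> {} \<and>
          measure_pmf.expectation (M E) (\<lambda>f. real (card (f ` E)))
            \<ge> c / \<epsilon> * real (OPT V E)))"
proof (intro exI[of _ "1 / 12"] conjI allI impI)
  fix n :: nat and \<epsilon> :: real and V :: "nat set" and M :: "nat set set \<Rightarrow> (nat set \<Rightarrow> nat) pmf"
  assume "n \<ge> 1" and "1 / real n < \<epsilon>" and "\<epsilon> \<le> 1" and "finite V" and "card V = n"
    and supp: "\<forall>E\<in>edge_sets V. set_pmf (M E) \<subseteq> orientations V" and dp: "edge_dp \<epsilon> V M"
  have "0 < 1 / real n"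
    using \<open>n \<ge> 1\<close> by simp
  then have "0 < \<epsilon>"
    using \<open>1 / real n < \<epsilon>\<close> by linarith
  then have "1 \<le> 1 / \<epsilon>" and "1 / \<epsilon> < card V"
    using \<open>\<epsilon> \<le> 1\<close> \<open>1 / real n < \<epsilon>\<close> \<open>n \<ge> 1\<close> \<open>card V = n\<close> by (simp_all add: field_simps)
  define k where "k = nat \<lfloor>1 / \<epsilon>\<rfloor>"
  have "1 \<le> k" and "real k \<le> 1 / \<epsilon>" and "1 / \<epsilon> - 1 < real k"
    unfolding k_def using \<open>1 \<le> 1 / \<epsilon>\<close> by linarith+
  then have "1 / \<epsilon> \<le> 2 * real k"
    by linarith
  have "\<epsilon> * k \<le> 1"
    using \<open>real k \<le> 1 / \<epsilon>\<close> \<open>0 < \<epsilon>\<close> by (simp add: field_simps)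
  have "k + 1 \<le> card V"
    using \<open>real k \<le> 1 / \<epsilon>\<close> \<open>1 / \<epsilon> < card V\<close> by linarith
  then obtain S where "S \<subseteq> V" and "card S = k + 1"
    using obtain_subset_with_card_n by metis
  obtain E where "E \<in> edge_sets V" and "E \<noteq> {}" and "OPT V E \<le> 1"
    and bound: "real k / 6 \<le> measure_pmf.expectation (M E) (\<lambda>f. real (card (f ` E)))"
    using edge_dp_star_lower_bound[OF dp less_imp_le[OF \<open>0 < \<epsilon>\<close>] \<open>finite V\<close> supp
        \<open>S \<subseteq> V\<close> \<open>card S = k + 1\<close> \<open>1 \<le> k\<close> \<open>\<epsilon> * k \<le> 1\<close>]
    by blast
  have "1 / 12 / \<epsilon> * real (OPT V E) \<le> 1 / 12 / \<epsilon>"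
    using \<open>OPT V E \<le> 1\<close> by (intro mult_left_le) (use \<open>0 < \<epsilon>\<close> in auto)
  also have "\<dots> = (1 / \<epsilon>) / 12"
    by simp
  also have "\<dots> \<le> real k / 6"
    using divide_right_mono[OF \<open>1 / \<epsilon> \<le> 2 * real k\<close>, of 12] by simp
  finally have "1 / 12 / \<epsilon> * real (OPT V E) \<le> measure_pmf.expectation (M E) (\<lambda>f. real (card (f ` E)))"
    using bound by (rule order_trans)
  with \<open>E \<in> edge_sets V\<close> \<open>E \<noteq> {}\<close> show "\<exists>E\<in>edge_sets V. E \<noteq> {} \<and>
      1 / 12 / \<epsilon> * real (OPT V E) \<le> measure_pmf.expectation (M E) (\<lambda>f. real (card (f ` E)))"
    by blast
qed simp

end
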